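(* Let $H$ be a finite-dimensional real Hilbert space, $f:H\to\mathbb{R}\cup\{+\infty\}$ a proper lower semicontinuous function and $\bar x\in\operatorname{dom}f$. The following are equivalent: (i) $\bar x$ is a strict local minimizer of order two for $f$; (ii) $0\in\partial_pf(\bar x)$ and there exists $\beta>0$ such that $f''_-(\bar x,0,h)\ge\beta$ holds uniformly with respect to $h\in S_H$; (iii) $0\in\partial_pf(\bar x)$ and there exists $\beta>0$ such that $f''_-(\bar x,0,h)\ge\beta$ for all $h\in S_H$; (iv) $0\in\partial_pf(\bar x)$ and $f''_-(\bar x,0,h)>0$ for all $h\in S_H$.
   Context: $S_H$ and $B_H$ are the unit sphere and closed unit ball of $H$; $B(x,\delta)$ is the open ball. $\bar x$ is a strict local minimizer of order two for $f$ if there exist $\beta,\delta>0$ with $f(x)\ge f(\bar x)+\frac{\beta}{2}\|x-\bar x\|^2$ for all $x\in B(\bar x,\delta)$. Proximal subdifferential: $\zeta\in\partial_p f(x)$ iff there exist $\sigma,\delta>0$ with $f(y)\ge f(x)+\langle\zeta,y-x\rangle-\frac{\sigma}{2}\|y-x\|^2$ whenever $\|y-x\|<\delta$. $\Delta_2 f(\bar x,p,t,u):=\frac{f(\bar x+tu)-f(\bar x)-t\langle p,u\rangle}{\frac12t^2}$, $f''_-(\bar x,p,h):=\liminf_{h'\to h,\,t\downarrow0}\Delta_2f(\bar x,p,t,h')$. "$f''_-(\bar x,p,h)\ge\beta$ holds uniformly with respect to $h\in A$" means: for every $\varepsilon>0$ there exists $\delta>0$ such that $\Delta_2f(\bar x,p,t,h)\ge\beta-\varepsilon$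 for all $t\in(0,\delta)$ and all $h\in A+\delta B_H$. *)

theory Defs
  imports "HOL-Analysis.Analysis" "HOL-Library.Extended_Real"
begin

text \<open>Extended-real-valued functions f : H -> R \<union> {+\<infinity>} are modelled as
  functions into ereal that never take the value -\<infinity>.\<close>

definition proper_fun :: "('a \<Rightarrow> ereal) \<Rightarrow> bool" where
  "proper_fun f \<longleftrightarrow> (\<forall>x. f x \<noteq> -\<infinity>) \<and> (\<exists>x. f x \<noteq> \<infinity>)"

definition lsc_fun :: "('a::topological_space \<Rightarrow> ereal) \<Rightarrow> bool" where
  "lsc_fun f \<longleftrightarrow> (\<forall>x. f x \<le> Liminf (at x) f)"

definition effdom :: "('a \<Rightarrow> ereal) \<Rightarrow> 'a set" where
  "effdom f = {x. f x < \<infinity>}"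

definition strict_local_min_order2 :: "('a::real_normed_vector \<Rightarrow> ereal) \<Rightarrow> 'a \<Rightarrow> bool" where
  "strict_local_min_order2 f xb \<longleftrightarrow>
     (\<exists>\<beta>>0. \<exists>\<delta>>0. \<forall>x\<in>ball xb \<delta>.
        f x \<ge> f xb + ereal (\<beta> / 2 * (norm (x - xb))\<^sup>2))"

definition prox_subdiff :: "('a::real_inner \<Rightarrow> ereal) \<Rightarrow> 'a \<Rightarrow> 'a set" where
  "prox_subdiff f x = {\<zeta>. \<exists>\<sigma>>0. \<exists>\<delta>>0. \<forall>y. norm (y - x) < \<delta> \<longrightarrow>
        f y \<ge> f x + ereal (inner \<zeta> (y - x) - \<sigma> / 2 * (norm (y - x))\<^sup>2)}"

definition Delta2 :: "('a::real_inner \<Rightarrow> ereal) \<Rightarrow> 'a \<Rightarrow> 'a \<Rightarrow> real \<Rightarrow> 'a \<Rightarrow> ereal" where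
  "Delta2 f xb p t u = (f (xb + t *\<^sub>R u) - f xb - ereal (t * inner p u)) / ereal (t\<^sup>2 / 2)"

definition lower_sod :: "('a::real_inner \<Rightarrow> ereal) \<Rightarrow> 'a \<Rightarrow> 'a \<Rightarrow> 'a \<Rightarrow> ereal" where
  "lower_sod f xb p h =
     Liminf (at (h, 0) within (UNIV \<times> {0<..})) (\<lambda>(h', t). Delta2 f xb p t h')"

definition unif_lower_sod_ge :: "('a::real_inner \<Rightarrow> ereal) \<Rightarrow> 'a \<Rightarrow> 'a \<Rightarrow> real \<Rightarrow> 'a set \<Rightarrow> bool" where
  "unif_lower_sod_ge f xb p \<beta> A \<longleftrightarrow>
     (\<forall>\<epsilon>>0. \<exists>\<delta>>0. \<forall>t\<in>{0<..<\<delta>}. \<forall>h\<in>{a + \<delta> *\<^sub>R b | a b. a \<in> A \<and> norm b \<le> 1}.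
        Delta2 f xb p t h \<ge> ereal (\<beta> - \<epsilon>))"

end

theory Submission
  imports Defs
begin

text \<open>With p = 0 and f xb finite, a lower bound r on the difference quotient Delta2 at (t, u)
  is just the quadratic growth estimate f (xb + t u) \<ge> f xb + r t^2/2. Quadratic growth thus
  gives a bound uniform near the unit sphere, which bounds the liminf from below. Conversely,
  positivity of the liminf at each direction yields a positive bound on Delta2 on a
  neighbourhood of that direction for small t; compactness of the sphere makes the bound
  uniform, and this is quadratic growth again.\<close>

lemma Delta2_ge_iff:
  assumes "t > 0" and "f xb = ereal a"
  shows "ereal r \<le> Delta2 f xb p t u
     \<longleftrightarrow> ereal (a + t * inner p u + r * t\<^sup>2 / 2) \<le> f (xb + t *\<^sub>R u)"
proof -
  have t2: "t\<^sup>2 / 2 > 0" using assms(1) by simp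
  show ?thesis
  proof (cases "f (xb + t *\<^sub>R u)")
    case (real v)
    have "Delta2 f xb p t u = ereal ((v - a - t * inner p u) / (t\<^sup>2 / 2))"
      unfolding Delta2_def using real assms(2) t2 by simp
    moreover have "r \<le> (v - a - t * inner p u) / (t\<^sup>2 / 2) \<longleftrightarrow> a + t * inner p u + r * t\<^sup>2 / 2 \<le> v"
      using t2 by (simp add: pos_le_divide_eq algebra_simps) argo
    ultimately show ?thesis using real by simp
  qed (use assms(2) t2 in \<open>simp_all add: Delta2_def\<close>)
qed

lemma Delta2_gt_iff:
  assumes "t > 0" and "f xb = ereal a"
  shows "ereal r < Delta2 f xb p t u
     \<longleftrightarrow> ereal (a + t * inner p u + r * t\<^sup>2 / 2) < f (xb + t *\<^sub>R u)"
proof -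
  have t2: "t\<^sup>2 / 2 > 0" using assms(1) by simp
  show ?thesis
  proof (cases "f (xb + t *\<^sub>R u)")
    case (real v)
    have "Delta2 f xb p t u = ereal ((v - a - t * inner p u) / (t\<^sup>2 / 2))"
      unfolding Delta2_def using real assms(2) t2 by simp
    moreover have "r < (v - a - t * inner p u) / (t\<^sup>2 / 2) \<longleftrightarrow> a + t * inner p u + r * t\<^sup>2 / 2 < v"
      using t2 by (simp add: pos_less_divide_eq algebra_simps) argo
    ultimately show ?thesis using real by simp
  qed (use assms(2) t2 in \<open>simp_all add: Delta2_def\<close>)
qed

lemma mem_thickening_iff:
  fixes A :: "'a::real_normed_vector set"
  assumes "d > 0"
  shows "h \<in> {a + d *\<^sub>R b | a b. a \<in> A \<and> norm b \<le> 1} \<longleftrightarrow> (\<exists>a\<in>A. dist h a \<le> d)"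
proof
  assume "h \<in> {a + d *\<^sub>R b | a b. a \<in> A \<and> norm b \<le> 1}"
  then obtain a b where "a \<in> A" "norm b \<le> 1" "h = a + d *\<^sub>R b" by blast
  moreover have "dist h a \<le> d"
    using \<open>h = a + d *\<^sub>R b\<close> \<open>norm b \<le> 1\<close> assms mult_left_le[of "norm b" d]
    by (simp add: dist_norm)
  ultimately show "\<exists>a\<in>A. dist h a \<le> d" by blast
next
  assume "\<exists>a\<in>A. dist h a \<le> d"
  then obtain a where "a \<in> A" "norm (h - a) \<le> d" by (auto simp: dist_norm)
  moreover have "h = a + d *\<^sub>R ((1 / d) *\<^sub>R (h - a))" using assms by simp
  moreover have "norm ((1 / d) *\<^sub>R (h - a)) \<le> 1"
    using assms \<open>norm (h - a) \<le> d\<close> by simp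
  ultimately show "h \<in> {a + d *\<^sub>R b | a b. a \<in> A \<and> norm b \<le> 1}" by blast
qed

lemma strict_local_min_order2_imp_zero_prox_subdiff:
  assumes "strict_local_min_order2 f xb"
  shows "0 \<in> prox_subdiff f xb"
proof -
  obtain \<beta> \<delta> where "\<beta> > 0" "\<delta> > 0" and
    min: "\<And>x. x \<in> ball xb \<delta> \<Longrightarrow> f xb + ereal (\<beta> / 2 * (norm (x - xb))\<^sup>2) \<le> f x"
    using assms unfolding strict_local_min_order2_def by blast
  have "f xb + ereal (inner 0 (y - xb) - 1 / 2 * (norm (y - xb))\<^sup>2) \<le> f y"
    if "norm (y - xb) < \<delta>" for y
  proof -
    have "ereal (inner 0 (y - xb) - 1 / 2 * (norm (y - xb))\<^sup>2) \<le> ereal (\<beta> / 2 * (norm (y - xb))\<^sup>2)"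
      using \<open>\<beta> > 0\<close> by (simp add: order_trans[of _ 0])
    then have "f xb + ereal (inner 0 (y - xb) - 1 / 2 * (norm (y - xb))\<^sup>2)
               \<le> f xb + ereal (\<beta> / 2 * (norm (y - xb))\<^sup>2)"
      by (rule add_left_mono)
    also have "\<dots> \<le> f y"
      using min[of y] that by (simp add: dist_norm norm_minus_commute)
    finally show ?thesis .
  qed
  then show ?thesis unfolding prox_subdiff_def using \<open>\<delta> > 0\<close> zero_less_one by blast
qed

lemma strict_local_min_order2_imp_unif_lower_sod_ge:
  fixes f :: "'a::real_inner \<Rightarrow> ereal"
  assumes "strict_local_min_order2 f xb" and "f xb = ereal a"
  shows "\<exists>\<beta>>0. unif_lower_sod_ge f xb 0 \<beta> (sphere 0 1)"
proof -
  obtain \<beta> \<delta> where \<beta>: "\<beta> > 0" and "\<delta> > 0" and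
    min: "\<And>x. x \<in> ball xb \<delta> \<Longrightarrow> f xb + ereal (\<beta> / 2 * (norm (x - xb))\<^sup>2) \<le> f x"
    using assms(1) unfolding strict_local_min_order2_def by blast
  have "\<exists>d>0. \<forall>t\<in>{0<..<d}. \<forall>h\<in>{u + d *\<^sub>R v | u v. u \<in> sphere 0 1 \<and> norm v \<le> 1}.
          ereal (\<beta> - \<epsilon>) \<le> Delta2 f xb 0 t h" if "\<epsilon> > 0" for \<epsilon>
  proof (intro exI conjI ballI)
    define d where "d = min (1/2) (min (\<delta>/2) (\<epsilon>/(2*\<beta>)))"
    show "d > 0" using \<beta> \<open>\<delta> > 0\<close> \<open>\<epsilon> > 0\<close> by (simp add: d_def)
    have d_le: "d \<le> 1/2" "d \<le> \<delta>/2" "d \<le> \<epsilon> / (2*\<beta>)" by (simp_all add: d_def)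
    fix t :: real and h :: 'a
    assume t: "t \<in> {0<..<d}" and "h \<in> {u + d *\<^sub>R v | u v. u \<in> sphere 0 1 \<and> norm v \<le> 1}"
    then obtain u where "norm u = 1" "dist h u \<le> d"
      using mem_thickening_iff[OF \<open>d > 0\<close>, of h "sphere 0 1"] by auto
    then have norm_h: "1 - d \<le> norm h" "norm h \<le> 1 + d"
      using norm_triangle_ineq2[of u h] norm_triangle_ineq2[of h u]
      by (auto simp: dist_norm norm_minus_commute)
    have "norm (t *\<^sub>R h) < \<delta>"
    proof -
      have "norm (t *\<^sub>R h) \<le> t * 2"
        using norm_h t d_le by (auto intro: mult_left_mono)
      also have "\<dots> < \<delta>" using t d_le by simp
      finally show ?thesis .
    qed
    then have min_at: "f xb + ereal (\<beta> / 2 * (t * norm h)\<^sup>2) \<le> f (xb + t *\<^sub>R h)"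
      using min[of "xb + t *\<^sub>R h"] t by (simp add: dist_norm)
    have "\<beta> - \<epsilon> \<le> \<beta> * (norm h)\<^sup>2"
    proof -
      have "1 - 2 * d \<le> (1 - d)\<^sup>2" by (simp add: power2_eq_square algebra_simps)
      also have "\<dots> \<le> (norm h)\<^sup>2" using norm_h d_le by (simp add: power_mono)
      finally have "\<beta> * (1 - 2 * d) \<le> \<beta> * (norm h)\<^sup>2" using \<beta> by simp
      moreover have "\<beta> * (2 * d) \<le> \<epsilon>" using \<beta> d_le(3) by (simp add: le_divide_eq algebra_simps)
      ultimately show ?thesis by (simp add: algebra_simps)
    qed
    then have "a + (\<beta> - \<epsilon>) * t\<^sup>2 / 2 \<le> a + \<beta> / 2 * (t * norm h)\<^sup>2"
      using mult_right_mono[of "\<beta> - \<epsilon>" "\<beta> * (norm h)\<^sup>2" "t\<^sup>2"]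
      by (simp add: power_mult_distrib algebra_simps)
    then have "ereal (a + (\<beta> - \<epsilon>) * t\<^sup>2 / 2) \<le> f xb + ereal (\<beta> / 2 * (t * norm h)\<^sup>2)"
      using assms(2) by simp
    also note min_at
    finally have "ereal (a + (\<beta> - \<epsilon>) * t\<^sup>2 / 2) \<le> f (xb + t *\<^sub>R h)" .
    then show "ereal (\<beta> - \<epsilon>) \<le> Delta2 f xb 0 t h"
      using Delta2_ge_iff[of t f xb a] assms(2) t by simp
  qed
  then show ?thesis unfolding unif_lower_sod_ge_def using \<beta> by blast
qed

lemma unif_lower_sod_ge_imp_lower_sod_ge:
  assumes "unif_lower_sod_ge f xb p \<beta> A" and "h \<in> A"
  shows "ereal \<beta> \<le> lower_sod f xb p h"
  unfolding lower_sod_def le_Liminf_iff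
proof (intro allI impI)
  fix y assume "y < ereal \<beta>"
  obtain \<epsilon> where "\<epsilon> > 0" "y < ereal (\<beta> - \<epsilon>)"
  proof (cases y)
    case (real r)
    then show ?thesis using \<open>y < ereal \<beta>\<close> that[of "(\<beta> - r) / 2"] by (auto simp: field_simps)
  next
    case MInf
    then show ?thesis using that[of 1] by auto
  qed (use \<open>y < ereal \<beta>\<close> in auto)
  then obtain d where "d > 0" and
    bound: "\<And>t h'. t \<in> {0<..<d} \<Longrightarrow> h' \<in> {a + d *\<^sub>R b | a b. a \<in> A \<and> norm b \<le> 1}
            \<Longrightarrow> ereal (\<beta> - \<epsilon>) \<le> Delta2 f xb p t h'"
    using assms(1) unfolding unif_lower_sod_ge_def by meson
  show "\<forall>\<^sub>F x in at (h, 0) within UNIV \<times> {0<..}. y < (case x of (h', t) \<Rightarrow> Delta2 f xb p t h')"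
    unfolding eventually_at
  proof (intro exI[of _ d] conjI \<open>d > 0\<close> ballI impI)
    fix q :: "'a \<times> real"
    assume q: "q \<in> UNIV \<times> {0<..}" "q \<noteq> (h, 0) \<and> dist q (h, 0) < d"
    obtain h' t where q_eq: "q = (h', t)" by (cases q)
    have t: "t \<in> {0<..<d}" and "dist h' h \<le> d"
      using q dist_fst_le[of q "(h, 0)"] dist_snd_le[of q "(h, 0)"]
      by (auto simp: q_eq dist_real_def)
    then have "h' \<in> {a + d *\<^sub>R b | a b. a \<in> A \<and> norm b \<le> 1}"
      using mem_thickening_iff[OF \<open>d > 0\<close>, of h' A] assms(2) by blast
    then have "ereal (\<beta> - \<epsilon>) \<le> Delta2 f xb p t h'" by (rule bound[OF t])
    then show "y < (case q of (h', t) \<Rightarrow> Delta2 f xb p t h')"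
      using \<open>y < ereal (\<beta> - \<epsilon>)\<close> q_eq by simp
  qed
qed

lemma lower_sod_gt_imp_local_bound:
  assumes "ereal c < lower_sod f xb p h"
  shows "\<exists>d>0. \<forall>t\<in>{0<..<d}. \<forall>h'\<in>ball h d. ereal c < Delta2 f xb p t h'"
proof -
  have "\<forall>\<^sub>F q in at (h, 0) within UNIV \<times> {0<..}. ereal c < (case q of (h', t) \<Rightarrow> Delta2 f xb p t h')"
  proof -
    obtain z where "ereal c < z" "z < lower_sod f xb p h" using dense[OF assms] by blast
    then have "z \<le> Liminf (at (h, 0) within UNIV \<times> {0<..}) (\<lambda>(h', t). Delta2 f xb p t h')"
      unfolding lower_sod_def by simp
    then show ?thesis unfolding le_Liminf_iff using \<open>ereal c < z\<close> by blast
  qed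
  then obtain d where "d > 0" and
    bound: "\<And>q. q \<in> UNIV \<times> {0<..} \<Longrightarrow> q \<noteq> (h, 0) \<and> dist q (h, 0) < d \<Longrightarrow>
              ereal c < (case q of (h', t) \<Rightarrow> Delta2 f xb p t h')"
    unfolding eventually_at by blast
  have "ereal c < Delta2 f xb p t h'" if "t \<in> {0<..<d/2}" "h' \<in> ball h (d/2)" for t h'
  proof -
    have "dist (h', t) (h, 0) \<le> dist h' h + dist t 0"
      unfolding dist_Pair_Pair by (rule sqrt_sum_squares_le_sum) auto
    also have "\<dots> < d" using that by (simp add: dist_commute dist_real_def)
    finally show ?thesis using bound[of "(h', t)"] that by auto
  qed
  then show ?thesis using \<open>d > 0\<close> by (intro exI[of _ "d/2"]) auto
qed

lemma compact_lower_sod_pos_imp_unif_bound: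
  assumes "compact K" and "\<forall>h\<in>K. 0 < lower_sod f xb p h"
  shows "\<exists>c>0. \<exists>d>0. \<forall>h\<in>K. \<forall>t\<in>{0<..<d}. ereal c < Delta2 f xb p t h"
proof -
  have "\<forall>h\<in>K. \<exists>c d. c > 0 \<and> d > 0 \<and> (\<forall>t\<in>{0<..<d}. \<forall>h'\<in>ball h d. ereal c < Delta2 f xb p t h')"
  proof
    fix h assume "h \<in> K"
    then obtain c where c: "0 < ereal c" "ereal c < lower_sod f xb p h"
      using ereal_dense2 assms(2) by blast
    then obtain d where "d > 0" "\<forall>t\<in>{0<..<d}. \<forall>h'\<in>ball h d. ereal c < Delta2 f xb p t h'"
      using lower_sod_gt_imp_local_bound by blast
    then show "\<exists>c d. c > 0 \<and> d > 0 \<and> (\<forall>t\<in>{0<..<d}. \<forall>h'\<in>ball h d. ereal c < Delta2 f xb p t h')"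
      using c(1) by (intro exI[of _ c] exI[of _ d]) simp
  qed
  then obtain C D where CD: "\<And>h. h \<in> K \<Longrightarrow> C h > 0 \<and> D h > 0 \<and>
      (\<forall>t\<in>{0<..<D h}. \<forall>h'\<in>ball h (D h). ereal (C h) < Delta2 f xb p t h')"
    by metis
  obtain T where T: "T \<subseteq> K" "finite T" "K \<subseteq> (\<Union>k\<in>T. ball k (D k))"
    by (rule compactE_image[OF assms(1), of K "\<lambda>k. ball k (D k)"]) (use CD in auto)
  define c where "c = Min (insert 1 (C ` T))"
  define d where "d = Min (insert 1 (D ` T))"
  have "c > 0" "d > 0" unfolding c_def d_def using T CD by (auto simp: Min_gr_iff)
  moreover have "ereal c < Delta2 f xb p t h" if "h \<in> K" "t \<in> {0<..<d}" for h t
  proof -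
    obtain k where k: "k \<in> T" "h \<in> ball k (D k)" using T \<open>h \<in> K\<close> by blast
    have "c \<le> C k" "d \<le> D k" using k(1) T(2) by (auto simp: c_def d_def)
    then have "t \<in> {0<..<D k}" using that(2) by simp
    then have "ereal (C k) < Delta2 f xb p t h" using CD[of k] k T(1) by blast
    then show ?thesis using \<open>c \<le> C k\<close> by (meson ereal_less_eq(3) le_less_trans)
  qed
  ultimately show ?thesis by blast
qed

lemma unif_bound_on_sphere_imp_strict_local_min_order2:
  assumes "c > 0" "d > 0" and "f xb = ereal a"
    and bound: "\<forall>h\<in>sphere 0 1. \<forall>t\<in>{0<..<d}. ereal c < Delta2 f xb 0 t h"
  shows "strict_local_min_order2 f xb"
  unfolding strict_local_min_order2_def
proof (intro exI conjI ballI)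
  fix x assume x: "x \<in> ball xb d"
  show "f xb + ereal (c / 2 * (norm (x - xb))\<^sup>2) \<le> f x"
  proof (cases "x = xb")
    case True then show ?thesis using assms(3) by simp
  next
    case False
    define t where "t = norm (x - xb)"
    define h where "h = (1 / t) *\<^sub>R (x - xb)"
    have t: "t \<in> {0<..<d}" using False x by (auto simp: t_def dist_norm norm_minus_commute)
    have "h \<in> sphere 0 1" "x = xb + t *\<^sub>R h" using t by (auto simp: h_def t_def)
    then have "ereal c < Delta2 f xb 0 t h" using bound t by blast
    then have "ereal (a + c * t\<^sup>2 / 2) < f x"
      using Delta2_gt_iff[of t f xb a] assms(3) t \<open>x = xb + t *\<^sub>R h\<close> by simp
    then show ?thesis using assms(3) by (simp add: t_def)
  qed
qed (use assms in auto)

theorem corollary5p1: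
  fixes f :: "'a::euclidean_space \<Rightarrow> ereal" and xb :: 'a
  assumes "proper_fun f" and "lsc_fun f" and "xb \<in> effdom f"
  shows "(strict_local_min_order2 f xb
            \<longleftrightarrow> (0 \<in> prox_subdiff f xb \<and> (\<exists>\<beta>>0. unif_lower_sod_ge f xb 0 \<beta> (sphere 0 1))))
       \<and> (strict_local_min_order2 f xb
            \<longleftrightarrow> (0 \<in> prox_subdiff f xb \<and> (\<exists>\<beta>>0. \<forall>h\<in>sphere 0 1. lower_sod f xb 0 h \<ge> ereal \<beta>)))
       \<and> (strict_local_min_order2 f xb
            \<longleftrightarrow> (0 \<in> prox_subdiff f xb \<and> (\<forall>h\<in>sphere 0 1. lower_sod f xb 0 h > 0)))"
proof -
  obtain a where a: "f xb = ereal a"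
    using assms(1,3) unfolding proper_fun_def effdom_def by (cases "f xb") auto
  let ?I = "strict_local_min_order2 f xb"
  let ?U = "\<exists>\<beta>>0. unif_lower_sod_ge f xb 0 \<beta> (sphere 0 1)"
  let ?B = "\<exists>\<beta>>0. \<forall>h\<in>sphere 0 1. lower_sod f xb 0 h \<ge> ereal \<beta>"
  let ?Pos = "\<forall>h\<in>sphere 0 1. lower_sod f xb 0 h > 0"
  have I_U: "?I \<Longrightarrow> ?U"
    using strict_local_min_order2_imp_unif_lower_sod_ge a by blast
  have U_B: "?U \<Longrightarrow> ?B"
    using unif_lower_sod_ge_imp_lower_sod_ge by blast
  have B_Pos: "?B \<Longrightarrow> ?Pos"
    by (meson ereal_less(2) less_le_trans)
  have Pos_I: "?Pos \<Longrightarrow> ?I"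
  proof -
    assume ?Pos
    then obtain c d where "c > 0" "d > 0" "\<forall>h\<in>sphere 0 1. \<forall>t\<in>{0<..<d}. ereal c < Delta2 f xb 0 t h"
      using compact_lower_sod_pos_imp_unif_bound[OF compact_sphere] by blast
    then show ?I using unif_bound_on_sphere_imp_strict_local_min_order2 a by blast
  qed
  show ?thesis
    using I_U U_B B_Pos Pos_I strict_local_min_order2_imp_zero_prox_subdiff by blast
qed

end
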